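(* Let $D\subset\mathbb{C}^n$ be a bounded homogeneous domain with $0\in D$ and $\psi\in H(D)$. If $M_\psi$ is an isometry on $\mathcal{B}(D)$ (respectively $\mathcal{B}_{0^*}(D)$), then $M_{\psi^k}$ is an isometry on $\mathcal{B}(D)$ (respectively $\mathcal{B}_{0^*}(D)$) for all $k\in\mathbb{N}$; in particular $\|\psi^k\|_{\mathcal{B}}=1$ for all $k\in\mathbb{N}$.
   Context: A domain $D\subset\mathbb{C}^n$ is homogeneous if its group of biholomorphic self-maps acts transitively on $D$. $H(D)$ denotes the holomorphic functions $D\to\mathbb{C}$. For $f\in H(D)$ and $z\in D$, $Q_f(z)=\sup_{u\in\mathbb{C}^n\setminus\{0\}}\frac{|\nabla f(z)u|}{H_z(u,\bar u)^{1/2}}$, where $\nabla f(z)u=\sum_{j=1}^n\frac{\partial f}{\partial z_j}(z)u_j$ and $H_z$ is the Bergman metric of $D$; $\beta_f=\sup_{z\in D}Q_f(z)$. The Bloch space $\mathcal{B}(D)$ is the set of $f\in H(D)$ with $\beta_f<\infty$, with norm $\|f\|_{\mathcal{B}}=|f(0)|+\beta_f$. The $*$-little Bloch space is $\mathcal{B}_{0^*}(D)=\{f\in\mathcal{B}(D):\lim_{z\to\partial^*D}Q_f(z)=0\}$ with the same norm, where $\partial^*D$ is the distinguished boundary of $D$. $M_\psi f=\psi f$. *)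

theory Defs
  imports "HOL-Analysis.Analysis"
begin

definition cscale :: "complex \<Rightarrow> complex ^ 'n \<Rightarrow> complex ^ 'n" where
  "cscale c v = (\<chi> j. c * v $ j)"

definition holo :: "(complex ^ 'n \<Rightarrow> complex) \<Rightarrow> (complex ^ 'n) set \<Rightarrow> bool" where
  "holo f D \<longleftrightarrow> (\<forall>z\<in>D. \<exists>L. (f has_derivative L) (at z) \<and>
                   (\<forall>c v. L (cscale c v) = c * L v))"

definition holo_map :: "(complex ^ 'n \<Rightarrow> complex ^ 'n) \<Rightarrow> (complex ^ 'n) set \<Rightarrow> bool" where
  "holo_map F D \<longleftrightarrow> (\<forall>j. holo (\<lambda>z. F z $ j) D)"

definition domain :: "(complex ^ 'n) set \<Rightarrow> bool" where
  "domain D \<longleftrightarrow> open D \<and> connected D \<and> D \<noteq> {}"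

definition biholo_self :: "(complex ^ 'n \<Rightarrow> complex ^ 'n) \<Rightarrow> (complex ^ 'n) set \<Rightarrow> bool" where
  "biholo_self F D \<longleftrightarrow> holo_map F D \<and> F ` D \<subseteq> D \<and>
     (\<exists>G. holo_map G D \<and> G ` D \<subseteq> D \<and> (\<forall>x\<in>D. G (F x) = x \<and> F (G x) = x))"

definition homogeneous_domain :: "(complex ^ 'n) set \<Rightarrow> bool" where
  "homogeneous_domain D \<longleftrightarrow> domain D \<and>
     (\<forall>z\<in>D. \<forall>w\<in>D. \<exists>F. biholo_self F D \<and> F z = w)"

text \<open>Bergman space A^2(D) and Bergman kernel (via the reproducing property),
  with respect to Lebesgue measure on C^n = R^(2n).\<close>
definition bergman_space :: "(complex ^ 'n) set \<Rightarrow> (complex ^ 'n \<Rightarrow> complex) set" where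
  "bergman_space D = {f. holo f D \<and> set_integrable lborel D (\<lambda>z. (cmod (f z))\<^sup>2)}"

definition bergman_kernel :: "(complex ^ 'n) set \<Rightarrow> complex ^ 'n \<Rightarrow> complex ^ 'n \<Rightarrow> complex" where
  "bergman_kernel D z w = (THE k. (\<forall>x. x \<notin> D \<longrightarrow> k x = 0) \<and> k \<in> bergman_space D \<and>
      (\<forall>f\<in>bergman_space D. f w = (LINT x:D|lborel. f x * cnj (k x)))) z"

text \<open>Bergman metric H_z(u, conj u) = sum_{i,j} d^2 log K(z,z)/dz_i d(conj z_j) u_i conj u_j,
  written as (1/4) of the Laplacian of zeta |-> log K(z + zeta u, z + zeta u) at zeta = 0.\<close>
definition bergman_metric :: "(complex ^ 'n) set \<Rightarrow> complex ^ 'n \<Rightarrow> complex ^ 'n \<Rightarrow> real" where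
  "bergman_metric D z u =
     (let g = (\<lambda>v. \<lambda>t::real. ln (Re (bergman_kernel D (z + t *\<^sub>R v) (z + t *\<^sub>R v))))
      in (deriv (deriv (g u)) 0 + deriv (deriv (g (cscale \<i> u))) 0) / 4)"

definition partial_z :: "(complex ^ 'n \<Rightarrow> complex) \<Rightarrow> complex ^ 'n \<Rightarrow> 'n \<Rightarrow> complex" where
  "partial_z f z j = deriv (\<lambda>\<zeta>. f (z + axis j \<zeta>)) 0"

definition grad_app :: "(complex ^ 'n \<Rightarrow> complex) \<Rightarrow> complex ^ 'n \<Rightarrow> complex ^ 'n \<Rightarrow> complex" where
  "grad_app f z u = (\<Sum>j\<in>UNIV. partial_z f z j * u $ j)"

definition bloch_Q :: "(complex ^ 'n) set \<Rightarrow> (complex ^ 'n \<Rightarrow> complex) \<Rightarrow> complex ^ 'n \<Rightarrow> real" where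
  "bloch_Q D f z = Sup {cmod (grad_app f z u) / sqrt (bergman_metric D z u) | u. u \<noteq> 0}"

definition bloch_beta :: "(complex ^ 'n) set \<Rightarrow> (complex ^ 'n \<Rightarrow> complex) \<Rightarrow> real" where
  "bloch_beta D f = Sup (bloch_Q D f ` D)"

definition bloch_space :: "(complex ^ 'n) set \<Rightarrow> (complex ^ 'n \<Rightarrow> complex) set" where
  "bloch_space D = {f. holo f D \<and> bdd_above (bloch_Q D f ` D)}"

definition bloch_norm :: "(complex ^ 'n) set \<Rightarrow> (complex ^ 'n \<Rightarrow> complex) \<Rightarrow> real" where
  "bloch_norm D f = cmod (f 0) + bloch_beta D f"

definition distinguished_boundary :: "(complex ^ 'n) set \<Rightarrow> (complex ^ 'n) set" where
  "distinguished_boundary D = \<Inter> {S. closed S \<and> S \<subseteq> closure D \<and>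
      (\<forall>f. continuous_on (closure D) f \<and> holo f D \<longrightarrow>
          (\<forall>z\<in>closure D. \<exists>s\<in>S. cmod (f z) \<le> cmod (f s)))}"

definition little_bloch_star :: "(complex ^ 'n) set \<Rightarrow> (complex ^ 'n \<Rightarrow> complex) set" where
  "little_bloch_star D = {f \<in> bloch_space D. \<forall>\<epsilon>>0. \<exists>\<delta>>0. \<forall>z\<in>D.
      infdist z (distinguished_boundary D) < \<delta> \<longrightarrow> bloch_Q D f z < \<epsilon>}"

definition mult_isometry :: "(complex ^ 'n) set \<Rightarrow> (complex ^ 'n \<Rightarrow> complex) set \<Rightarrow> (complex ^ 'n \<Rightarrow> complex) \<Rightarrow> bool" where
  "mult_isometry D X \<psi> \<longleftrightarrow> (\<forall>f\<in>X. (\<lambda>z. \<psi> z * f z) \<in> X \<and>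
       bloch_norm D (\<lambda>z. \<psi> z * f z) = bloch_norm D f)"

end

theory Submission
  imports Defs
begin

text \<open>
  Multiplication operators compose:
  M_(phi*psi) = M_phi o M_psi, so if M_phi and M_psi are isometries of a space X of
  functions (with the Bloch norm), so is M_(phi*psi); by induction every power M_(psi^k)
  is an isometry, M_(psi^0) = M_1 being the identity.  Next, a constant function c has
  vanishing gradient, hence Q_c = 0 everywhere; so c lies in the Bloch space and in the
  *-little Bloch space, and its Bloch norm is |c|.  Finally, if M_mu is an isometry of a
  space containing the constant 1, then the norm of mu = M_mu 1 equals the norm of 1,
  namely 1.  Applied to mu = psi^k for X = B(D) and X = B_0*(D) this gives the theorem.
\<close>

lemma mult_isometry_one: "mult_isometry D X (\<lambda>z. 1)"
  by (simp add: mult_isometry_def)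

text \<open>M_(phi*psi) = M_phi o M_psi: a composition of isometries of X is an isometry of X.\<close>
lemma mult_isometry_mult:
  assumes phi: "mult_isometry D X \<phi>" and psi: "mult_isometry D X \<psi>"
  shows "mult_isometry D X (\<lambda>z. \<phi> z * \<psi> z)"
  unfolding mult_isometry_def
proof
  fix f assume f: "f \<in> X"
  let ?g = "\<lambda>z. \<psi> z * f z"
  have g: "?g \<in> X" "bloch_norm D ?g = bloch_norm D f"
    using psi f unfolding mult_isometry_def by auto
  have "(\<lambda>z. \<phi> z * ?g z) \<in> X" "bloch_norm D (\<lambda>z. \<phi> z * ?g z) = bloch_norm D ?g"
    using phi g(1) unfolding mult_isometry_def by auto
  moreover have "(\<lambda>z. \<phi> z * \<psi> z * f z) = (\<lambda>z. \<phi> z * ?g z)"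
    by (simp add: mult.assoc)
  ultimately show "(\<lambda>z. \<phi> z * \<psi> z * f z) \<in> X \<and>
      bloch_norm D (\<lambda>z. \<phi> z * \<psi> z * f z) = bloch_norm D f"
    using g(2) by simp
qed

lemma mult_isometry_power:
  assumes "mult_isometry D X \<psi>"
  shows "mult_isometry D X (\<lambda>z. \<psi> z ^ k)"
proof (induction k)
  case 0
  show ?case using mult_isometry_one by simp
next
  case (Suc k)
  show ?case using mult_isometry_mult[OF assms Suc] by simp
qed

lemma grad_app_const: "grad_app (\<lambda>z. c) z u = 0"
  by (simp add: grad_app_def partial_z_def)

text \<open>C^n has a nonzero vector, so the supremum defining Q_f is over a nonempty set.\<close>
lemma exists_nonzero_vector: "\<exists>u::complex ^ 'n. u \<noteq> 0"
proof
  show "(\<chi> j. 1 :: complex ^ 'n) \<noteq> 0"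
    by (metis one_neq_zero vec_lambda_beta zero_index)
qed

lemma bloch_Q_const: "bloch_Q D (\<lambda>z. c) z = 0"
proof -
  have "{cmod (grad_app (\<lambda>z. c) z u) / sqrt (bergman_metric D z u) | u. u \<noteq> 0} = {0}"
    using exists_nonzero_vector by (auto simp: grad_app_const)
  then show ?thesis unfolding bloch_Q_def by simp
qed

lemma holo_const: "holo (\<lambda>z. c) D"
  unfolding holo_def by (auto intro!: exI[of _ "\<lambda>_. 0"])

lemma const_in_bloch_space: "(\<lambda>z. c) \<in> bloch_space D"
  unfolding bloch_space_def bdd_above_def by (auto simp: holo_const bloch_Q_const)

lemma const_in_little_bloch_star: "(\<lambda>z. c) \<in> little_bloch_star D"
  by (simp add: little_bloch_star_def const_in_bloch_space bloch_Q_const)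

lemma bloch_norm_const:
  assumes "D \<noteq> {}"
  shows "bloch_norm D (\<lambda>z. c) = cmod c"
proof -
  have "bloch_Q D (\<lambda>z. c) ` D = {0}"
    using assms by (auto simp: bloch_Q_const)
  then show ?thesis by (simp add: bloch_norm_def bloch_beta_def)
qed

text \<open>If M_mu is an isometry of a space containing 1, then mu = M_mu 1 has the norm of 1.\<close>
lemma mult_isometry_norm_one:
  assumes "mult_isometry D X \<mu>" and "(\<lambda>z. 1) \<in> X" and "D \<noteq> {}"
  shows "bloch_norm D \<mu> = 1"
proof -
  have "bloch_norm D (\<lambda>z. \<mu> z * 1) = bloch_norm D (\<lambda>z. 1)"
    using assms(1,2) unfolding mult_isometry_def by auto
  then show ?thesis using bloch_norm_const[OF assms(3), of 1] by simp
qed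

lemma mult_isometry_powers_norm_one:
  assumes "mult_isometry D X \<psi>" and "(\<lambda>z. 1) \<in> X" and "D \<noteq> {}"
  shows "\<forall>k::nat. mult_isometry D X (\<lambda>z. \<psi> z ^ k) \<and> bloch_norm D (\<lambda>z. \<psi> z ^ k) = 1"
  using mult_isometry_power[OF assms(1)] mult_isometry_norm_one assms(2,3) by blast

theorem mainTheorem12:
  fixes D :: "(complex ^ 'n) set" and \<psi> :: "complex ^ 'n \<Rightarrow> complex"
  assumes "bounded D" and "homogeneous_domain D" and "0 \<in> D" and "holo \<psi> D"
  shows "(mult_isometry D (bloch_space D) \<psi> \<longrightarrow>
            (\<forall>k::nat. mult_isometry D (bloch_space D) (\<lambda>z. \<psi> z ^ k) \<and>
                      bloch_norm D (\<lambda>z. \<psi> z ^ k) = 1))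
       \<and> (mult_isometry D (little_bloch_star D) \<psi> \<longrightarrow>
            (\<forall>k::nat. mult_isometry D (little_bloch_star D) (\<lambda>z. \<psi> z ^ k) \<and>
                      bloch_norm D (\<lambda>z. \<psi> z ^ k) = 1))"
proof -
  have "D \<noteq> {}" using \<open>0 \<in> D\<close> by blast
  then show ?thesis
    using mult_isometry_powers_norm_one[OF _ const_in_bloch_space]
          mult_isometry_powers_norm_one[OF _ const_in_little_bloch_star]
    by blast
qed

end
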